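(* Let $A\subseteq B$ be a ring extension (commutative rings with identity) with the finite character. Then every $B$-regular and locally finitely generated ideal of $A$ is finitely generated.
   Context: An $A$-submodule $S$ of $B$ is called $B$-regular if $SB=B$. The extension $A\subseteq B$ has the finite character if every $B$-regular ideal of $A$ is contained in only finitely many maximal ideals of $A$. An ideal $\mathfrak a$ of $A$ is locally finitely generated if $\mathfrak aA_{\mathfrak m}$ is a finitely generated ideal of $A_{\mathfrak m}$ for every maximal ideal $\mathfrak m$ of $A$. *)

theory Defs
  imports "HOL-Algebra.Algebra"
begin

definition fin_gen_ideal :: "('a, 'b) ring_scheme \<Rightarrow> 'a set \<Rightarrow> bool" where
  "fin_gen_ideal R I \<longleftrightarrow> ideal I R \<and> (\<exists>S. finite S \<and> S \<subseteq> carrier R \<and> I = genideal R S)"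

text \<open>Localization R_p of a commutative ring R at a prime ideal p, built as
  equivalence classes of fractions r/s with s outside p.\<close>
definition loc_rel :: "('a, 'b) ring_scheme \<Rightarrow> 'a set \<Rightarrow> (('a \<times> 'a) \<times> ('a \<times> 'a)) set" where
  "loc_rel R p = {((r, s), (r', s')). r \<in> carrier R \<and> s \<in> carrier R - p \<and>
      r' \<in> carrier R \<and> s' \<in> carrier R - p \<and>
      (\<exists>t \<in> carrier R - p. t \<otimes>\<^bsub>R\<^esub> (r \<otimes>\<^bsub>R\<^esub> s' \<ominus>\<^bsub>R\<^esub> r' \<otimes>\<^bsub>R\<^esub> s) = \<zero>\<^bsub>R\<^esub>)}"

definition frac :: "('a, 'b) ring_scheme \<Rightarrow> 'a set \<Rightarrow> 'a \<Rightarrow> 'a \<Rightarrow> ('a \<times> 'a) set" where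
  "frac R p r s = loc_rel R p `` {(r, s)}"

definition loc_mult :: "('a, 'b) ring_scheme \<Rightarrow> 'a set \<Rightarrow> ('a \<times> 'a) set \<Rightarrow> ('a \<times> 'a) set \<Rightarrow> ('a \<times> 'a) set" where
  "loc_mult R p U V = \<Union>{C. \<exists>r s r2 s2. C = frac R p (r \<otimes>\<^bsub>R\<^esub> r2) (s \<otimes>\<^bsub>R\<^esub> s2) \<and> (r, s) \<in> U \<and> (r2, s2) \<in> V}"

definition loc_add :: "('a, 'b) ring_scheme \<Rightarrow> 'a set \<Rightarrow> ('a \<times> 'a) set \<Rightarrow> ('a \<times> 'a) set \<Rightarrow> ('a \<times> 'a) set" where
  "loc_add R p U V = \<Union>{C. \<exists>r s r2 s2. C = frac R p (r \<otimes>\<^bsub>R\<^esub> s2 \<oplus>\<^bsub>R\<^esub> r2 \<otimes>\<^bsub>R\<^esub> s) (s \<otimes>\<^bsub>R\<^esub> s2) \<and> (r, s) \<in> U \<and> (r2, s2) \<in> V}"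

definition localization :: "('a, 'b) ring_scheme \<Rightarrow> 'a set \<Rightarrow> ('a \<times> 'a) set ring" where
  "localization R p =
    \<lparr> carrier = (carrier R \<times> (carrier R - p)) // loc_rel R p,
      monoid.mult = loc_mult R p,
      one = frac R p \<one>\<^bsub>R\<^esub> \<one>\<^bsub>R\<^esub>,
      ring.zero = frac R p \<zero>\<^bsub>R\<^esub> \<one>\<^bsub>R\<^esub>,
      ring.add = loc_add R p \<rparr>"

definition loc_ideal :: "('a, 'b) ring_scheme \<Rightarrow> 'a set \<Rightarrow> 'a set \<Rightarrow> ('a \<times> 'a) set set" where
  "loc_ideal R p I = genideal (localization R p) ((\<lambda>x. frac R p x \<one>\<^bsub>R\<^esub>) ` I)"

definition locally_fin_gen :: "('a, 'b) ring_scheme \<Rightarrow> 'a set \<Rightarrow> bool" where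
  "locally_fin_gen R I \<longleftrightarrow>
     (\<forall>m. maximalideal m R \<longrightarrow> fin_gen_ideal (localization R m) (loc_ideal R m I))"

definition B_regular :: "('a, 'b) ring_scheme \<Rightarrow> 'a set \<Rightarrow> bool" where
  "B_regular B S \<longleftrightarrow> genideal B S = carrier B"

definition finite_character :: "('a, 'b) ring_scheme \<Rightarrow> 'a set \<Rightarrow> bool" where
  "finite_character B A \<longleftrightarrow>
     (\<forall>I. ideal I (B\<lparr>carrier := A\<rparr>) \<and> B_regular B I \<longrightarrow>
          finite {m. maximalideal m (B\<lparr>carrier := A\<rparr>) \<and> I \<subseteq> m})"

end

theory Submission
  imports Defs
begin

text \<open>Since \<open>I B = B\<close>, already a finite \<open>F0 \<subseteq> I\<close> satisfies \<open>F0 B = B\<close>, so by the finite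
  character the ideal of \<open>A\<close> generated by \<open>F0\<close> lies in only finitely many maximal ideals.
  At each of them \<open>I\<close> is locally finitely generated, and clearing denominators of the local
  generators gives a finite \<open>F \<subseteq> I\<close> that generates \<open>I\<close> locally there. The ideal \<open>J\<close> generated
  by \<open>F0\<close> and these finitely many \<open>F\<close> then agrees with \<open>I\<close> locally at every maximal ideal
  \<open>m\<close> (trivially when \<open>F0 \<not>\<subseteq> m\<close>), hence \<open>J = I\<close>.\<close>

lemma (in ring) exists_maximalideal_superset:
  assumes C: "ideal C R" and one: "\<one> \<notin> C"
  shows "\<exists>m. maximalideal m R \<and> C \<subseteq> m"
proof -
  define S where "S = {J. ideal J R \<and> C \<subseteq> J \<and> \<one> \<notin> J}"
  have "\<exists>M\<in>S. \<forall>J\<in>S. M \<subseteq> J \<longrightarrow> J = M"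
  proof (rule subset_Zorn_nonempty)
    show "S \<noteq> {}" using C one unfolding S_def by blast
  next
    fix Ch assume ne: "Ch \<noteq> {}" and ch: "subset.chain S Ch"
    have ChS: "Ch \<subseteq> S" using ch by (simp add: pred_on.chain_def)
    then have "subset.chain {J. ideal J R} Ch"
      using ch unfolding S_def pred_on.chain_def by blast
    then have "ideal (\<Union>Ch) R" using chain_Union_is_ideal ne by presburger
    moreover have "C \<subseteq> \<Union>Ch" "\<one> \<notin> \<Union>Ch" using ne ChS unfolding S_def by auto
    ultimately show "\<Union>Ch \<in> S" unfolding S_def by simp
  qed
  then obtain M where "M \<in> S" and max: "\<And>J. J \<in> S \<Longrightarrow> M \<subseteq> J \<Longrightarrow> J = M" by blast
  then have M: "ideal M R" "C \<subseteq> M" "\<one> \<notin> M" unfolding S_def by auto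
  have "maximalideal M R"
  proof (rule maximalidealI[OF M(1)])
    show "carrier R \<noteq> M" using M(3) by auto
  next
    fix J assume J: "ideal J R" "M \<subseteq> J" "J \<subseteq> carrier R"
    show "J = M \<or> J = carrier R"
    proof (cases "\<one> \<in> J")
      case True
      then show ?thesis using ideal.one_imp_carrier[OF J(1)] by blast
    next
      case False
      then show ?thesis using max J M unfolding S_def by blast
    qed
  qed
  with M(2) show ?thesis by blast
qed

lemma (in cring) colon_ideal:
  assumes J: "ideal J R" and x: "x \<in> carrier R"
  shows "ideal {a \<in> carrier R. a \<otimes> x \<in> J} R"
proof (rule idealI[OF ring_axioms])
  interpret J: ideal J R by fact
  show "subgroup {a \<in> carrier R. a \<otimes> x \<in> J} (add_monoid R)"
    by unfold_locales
      (use x in \<open>auto simp: l_distr l_minus a_inv_def[symmetric] J.a_closed J.a_inv_closed\<close>)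
next
  fix a y assume a: "a \<in> {a \<in> carrier R. a \<otimes> x \<in> J}" and y: "y \<in> carrier R"
  then show "y \<otimes> a \<in> {a \<in> carrier R. a \<otimes> x \<in> J}"
    using x ideal.I_l_closed[OF J] by (simp add: m_assoc)
  with a y show "a \<otimes> y \<in> {a \<in> carrier R. a \<otimes> x \<in> J}"
    by (simp add: m_comm)
qed

lemma (in cring) mem_ideal_if_locally_mem:
  assumes J: "ideal J R" and x: "x \<in> carrier R"
    and local: "\<And>m. maximalideal m R \<Longrightarrow> \<exists>s \<in> carrier R - m. s \<otimes> x \<in> J"
  shows "x \<in> J"
proof (rule ccontr)
  assume "x \<notin> J"
  then have "\<one> \<notin> {a \<in> carrier R. a \<otimes> x \<in> J}" using x by simp
  then obtain m where "maximalideal m R" "{a \<in> carrier R. a \<otimes> x \<in> J} \<subseteq> m"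
    using exists_maximalideal_superset[OF colon_ideal[OF J x]] by blast
  then show False using local by blast
qed

lemma (in ring) ideal_finite_genideal_elems:
  assumes S: "S \<subseteq> carrier R"
  shows "ideal {b \<in> carrier R. \<exists>F. finite F \<and> F \<subseteq> S \<and> b \<in> Idl F} R"
    (is "ideal ?U R")
proof -
  have Idl: "ideal (Idl F) R" if "F \<subseteq> S" for F
    using S that genideal_ideal by (meson subset_trans)
  show ?thesis
  proof (rule idealI[OF ring_axioms])
    show "subgroup ?U (add_monoid R)"
    proof
      show "?U \<subseteq> carrier (add_monoid R)" by auto
      have "\<zero> \<in> Idl {}" by (rule additive_subgroup.zero_closed[OF ideal.axioms(1)[OF Idl]]) simp
      then show "\<one>\<^bsub>add_monoid R\<^esub> \<in> ?U" by auto
    next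
      fix a b assume "a \<in> ?U" "b \<in> ?U"
      then obtain F G where F: "finite F" "F \<subseteq> S" "a \<in> Idl F" and G: "finite G" "G \<subseteq> S" "b \<in> Idl G"
        by auto
      have FG: "F \<union> G \<subseteq> S" using F(2) G(2) by (rule Un_least)
      have "Idl F \<subseteq> Idl (F \<union> G)" "Idl G \<subseteq> Idl (F \<union> G)"
        by (rule subset_Idl_subset; use FG S in auto)+
      then have "a \<oplus> b \<in> Idl (F \<union> G)"
        using F(3) G(3) additive_subgroup.a_closed[OF ideal.axioms(1)[OF Idl[OF FG]]] by blast
      then show "a \<otimes>\<^bsub>add_monoid R\<^esub> b \<in> ?U" using F(1) G(1) FG ideal.Icarr[OF Idl[OF FG]] by auto
    next
      fix a assume "a \<in> ?U"
      then obtain F where F: "finite F" "F \<subseteq> S" "a \<in> Idl F" by auto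
      have "\<ominus> a \<in> Idl F" by (rule additive_subgroup.a_inv_closed[OF ideal.axioms(1)[OF Idl[OF F(2)]] F(3)])
      then show "inv\<^bsub>add_monoid R\<^esub> a \<in> ?U"
        using F ideal.Icarr[OF Idl[OF F(2)]] by (auto simp: a_inv_def[symmetric])
    qed
  next
    fix a x assume "a \<in> ?U" and x: "x \<in> carrier R"
    then obtain F where F: "finite F" "F \<subseteq> S" "a \<in> Idl F" by auto
    have "x \<otimes> a \<in> Idl F" "a \<otimes> x \<in> Idl F"
      using ideal.I_l_closed[OF Idl[OF F(2)] F(3) x] ideal.I_r_closed[OF Idl[OF F(2)] F(3) x] .
    then show "x \<otimes> a \<in> ?U" "a \<otimes> x \<in> ?U"
      using F ideal.Icarr[OF Idl[OF F(2)]] by auto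
  qed
qed

lemma (in ring) genideal_mem_finite_subset:
  assumes S: "S \<subseteq> carrier R" and b: "b \<in> Idl S"
  obtains F where "finite F" "F \<subseteq> S" "b \<in> Idl F"
proof -
  have "S \<subseteq> {b \<in> carrier R. \<exists>F. finite F \<and> F \<subseteq> S \<and> b \<in> Idl F}"
  proof
    fix y assume y: "y \<in> S"
    then have "finite {y}" "{y} \<subseteq> S" "y \<in> Idl {y}" using genideal_self' S by auto
    then show "y \<in> {b \<in> carrier R. \<exists>F. finite F \<and> F \<subseteq> S \<and> b \<in> Idl F}" using y S by blast
  qed
  then have "Idl S \<subseteq> {b \<in> carrier R. \<exists>F. finite F \<and> F \<subseteq> S \<and> b \<in> Idl F}"
    by (rule genideal_minimal[OF ideal_finite_genideal_elems[OF S]])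
  with b that show ?thesis by blast
qed

lemma B_regular_finite_subset:
  assumes B: "ring B" and S: "S \<subseteq> carrier B" and reg: "B_regular B S"
  obtains F where "finite F" "F \<subseteq> S" "B_regular B F"
proof -
  interpret B: ring B by fact
  have "\<one>\<^bsub>B\<^esub> \<in> genideal B S" using reg B.one_closed unfolding B_regular_def by simp
  then obtain F where F: "finite F" "F \<subseteq> S" "\<one>\<^bsub>B\<^esub> \<in> genideal B F"
    using B.genideal_mem_finite_subset[OF S] by blast
  have "ideal (genideal B F) B" using F(2) S by (intro B.genideal_ideal) auto
  then have "B_regular B F" unfolding B_regular_def using ideal.one_imp_carrier F(3) by blast
  with F that show ?thesis by blast
qed

lemma B_regular_mono:
  assumes B: "ring B" and FT: "F \<subseteq> T" and T: "T \<subseteq> carrier B" and reg: "B_regular B F"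
  shows "B_regular B T"
proof -
  have "carrier B \<subseteq> genideal B T"
    using reg ring.subset_Idl_subset[OF B T FT] unfolding B_regular_def by simp
  moreover have "genideal B T \<subseteq> carrier B"
    using ideal.Icarr[OF ring.genideal_ideal[OF B T]] by blast
  ultimately show ?thesis unfolding B_regular_def by blast
qed

lemma (in cring) prime_complement_mult_closed:
  assumes "primeideal p R" "s \<in> carrier R - p" "t \<in> carrier R - p"
  shows "s \<otimes> t \<in> carrier R - p"
  using primeideal.I_prime[OF assms(1)] assms(2,3) by auto

lemma (in cring) one_in_prime_complement:
  assumes "primeideal p R"
  shows "\<one> \<in> carrier R - p"
  using primeideal.I_notcarr[OF assms] ideal.one_imp_carrier[OF primeideal.axioms(1)[OF assms]]
  by auto

lemma (in cring) loc_rel_iff: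
  "((r, s), (r', s')) \<in> loc_rel R p \<longleftrightarrow>
     r \<in> carrier R \<and> s \<in> carrier R - p \<and> r' \<in> carrier R \<and> s' \<in> carrier R - p \<and>
     (\<exists>t \<in> carrier R - p. t \<otimes> (r \<otimes> s' \<ominus> r' \<otimes> s) = \<zero>)"
  by (simp add: loc_rel_def)

lemma (in cring) loc_rel_refl:
  assumes "primeideal p R" "r \<in> carrier R" "s \<in> carrier R - p"
  shows "((r, s), (r, s)) \<in> loc_rel R p"
proof -
  have "\<one> \<otimes> (r \<otimes> s \<ominus> r \<otimes> s) = \<zero>" using assms(2,3) by (simp add: r_neg minus_eq)
  then show ?thesis using assms one_in_prime_complement loc_rel_iff by blast
qed

lemma (in cring) loc_rel_sym:
  assumes "((r, s), (r', s')) \<in> loc_rel R p"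
  shows "((r', s'), (r, s)) \<in> loc_rel R p"
proof -
  obtain t where rel: "r \<in> carrier R" "s \<in> carrier R - p" "r' \<in> carrier R" "s' \<in> carrier R - p"
      "t \<in> carrier R - p" "t \<otimes> (r \<otimes> s' \<ominus> r' \<otimes> s) = \<zero>"
    using assms by (auto simp: loc_rel_def)
  have "t \<otimes> (r' \<otimes> s \<ominus> r \<otimes> s') = \<ominus> (t \<otimes> (r \<otimes> s' \<ominus> r' \<otimes> s))"
    using rel(1,3) DiffD1[OF rel(2)] DiffD1[OF rel(4)] DiffD1[OF rel(5)] by algebra
  then have "t \<otimes> (r' \<otimes> s \<ominus> r \<otimes> s') = \<zero>" using rel(6) by simp
  then show ?thesis using rel loc_rel_iff by blast
qed

lemma (in cring) loc_rel_trans: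
  assumes P: "primeideal p R"
    and "((r, s), (r', s')) \<in> loc_rel R p" "((r', s'), (r'', s'')) \<in> loc_rel R p"
  shows "((r, s), (r'', s'')) \<in> loc_rel R p"
proof -
  obtain t t' where rel: "r \<in> carrier R" "s \<in> carrier R - p" "r' \<in> carrier R" "s' \<in> carrier R - p"
      "r'' \<in> carrier R" "s'' \<in> carrier R - p" "t \<in> carrier R - p" "t' \<in> carrier R - p"
      "t \<otimes> (r \<otimes> s' \<ominus> r' \<otimes> s) = \<zero>" "t' \<otimes> (r' \<otimes> s'' \<ominus> r'' \<otimes> s') = \<zero>"
    using assms(2,3) by (auto simp: loc_rel_def)
  have "(t \<otimes> t' \<otimes> s') \<otimes> (r \<otimes> s'' \<ominus> r'' \<otimes> s) =
      (t' \<otimes> s'') \<otimes> (t \<otimes> (r \<otimes> s' \<ominus> r' \<otimes> s)) \<oplus> (t \<otimes> s) \<otimes> (t' \<otimes> (r' \<otimes> s'' \<ominus> r'' \<otimes> s'))"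
    using rel(1,3,5) DiffD1[OF rel(2)] DiffD1[OF rel(4)] DiffD1[OF rel(6)]
      DiffD1[OF rel(7)] DiffD1[OF rel(8)] by algebra
  then have "(t \<otimes> t' \<otimes> s') \<otimes> (r \<otimes> s'' \<ominus> r'' \<otimes> s) = \<zero>" using rel by simp
  moreover have "t \<otimes> t' \<otimes> s' \<in> carrier R - p"
    using rel prime_complement_mult_closed[OF P] by blast
  ultimately show ?thesis using rel loc_rel_iff by blast
qed

lemma (in cring) loc_rel_equiv:
  assumes P: "primeideal p R"
  shows "equiv (carrier R \<times> (carrier R - p)) (loc_rel R p)"
proof (rule equivI)
  show "loc_rel R p \<subseteq> (carrier R \<times> (carrier R - p)) \<times> (carrier R \<times> (carrier R - p))"
    by (auto simp: loc_rel_def)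
  show "refl_on (carrier R \<times> (carrier R - p)) (loc_rel R p)"
    by (rule refl_onI) (auto intro: loc_rel_refl[OF P])
  show "sym (loc_rel R p)"
    by (rule symI) (auto intro: loc_rel_sym)
  show "trans (loc_rel R p)"
    by (rule transI) (auto intro: loc_rel_trans[OF P])
qed

lemma mem_frac_iff: "(a, b) \<in> frac R p r s \<longleftrightarrow> ((r, s), (a, b)) \<in> loc_rel R p"
  by (simp add: frac_def)

lemma (in cring) frac_eq_iff:
  assumes "primeideal p R" "r \<in> carrier R" "s \<in> carrier R - p" "r' \<in> carrier R" "s' \<in> carrier R - p"
  shows "frac R p r s = frac R p r' s' \<longleftrightarrow> ((r, s), (r', s')) \<in> loc_rel R p"
  unfolding frac_def using eq_equiv_class_iff[OF loc_rel_equiv[OF assms(1)]] assms by auto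

lemma (in cring) frac_eqI:
  assumes "primeideal p R" "((r, s), (r', s')) \<in> loc_rel R p"
  shows "frac R p r s = frac R p r' s'"
  unfolding frac_def by (rule equiv_class_eq[OF loc_rel_equiv[OF assms(1)] assms(2)])

lemma (in cring) loc_rel_mult:
  assumes P: "primeideal p R"
    and "((r, s), (a, b)) \<in> loc_rel R p" "((r2, s2), (a2, b2)) \<in> loc_rel R p"
  shows "((r \<otimes> r2, s \<otimes> s2), (a \<otimes> a2, b \<otimes> b2)) \<in> loc_rel R p"
proof -
  obtain t t' where rel: "r \<in> carrier R" "s \<in> carrier R - p" "a \<in> carrier R" "b \<in> carrier R - p"
     "r2 \<in> carrier R" "s2 \<in> carrier R - p" "a2 \<in> carrier R" "b2 \<in> carrier R - p"
     "t \<in> carrier R - p" "t' \<in> carrier R - p"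
     "t \<otimes> (r \<otimes> b \<ominus> a \<otimes> s) = \<zero>" "t' \<otimes> (r2 \<otimes> b2 \<ominus> a2 \<otimes> s2) = \<zero>"
    using assms(2,3) by (auto simp: loc_rel_def)
  have "(t \<otimes> t') \<otimes> (r \<otimes> r2 \<otimes> (b \<otimes> b2) \<ominus> a \<otimes> a2 \<otimes> (s \<otimes> s2)) =
      (t \<otimes> r \<otimes> b) \<otimes> (t' \<otimes> (r2 \<otimes> b2 \<ominus> a2 \<otimes> s2)) \<oplus> (t' \<otimes> a2 \<otimes> s2) \<otimes> (t \<otimes> (r \<otimes> b \<ominus> a \<otimes> s))"
    using rel(1,3,5,7) DiffD1[OF rel(2)] DiffD1[OF rel(4)] DiffD1[OF rel(6)] DiffD1[OF rel(8)]
      DiffD1[OF rel(9)] DiffD1[OF rel(10)] by algebra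
  then have "(t \<otimes> t') \<otimes> (r \<otimes> r2 \<otimes> (b \<otimes> b2) \<ominus> a \<otimes> a2 \<otimes> (s \<otimes> s2)) = \<zero>" using rel by simp
  moreover have "t \<otimes> t' \<in> carrier R - p" "s \<otimes> s2 \<in> carrier R - p" "b \<otimes> b2 \<in> carrier R - p"
    using rel prime_complement_mult_closed[OF P] by blast+
  ultimately show ?thesis using rel loc_rel_iff by auto
qed

lemma (in cring) loc_rel_add:
  assumes P: "primeideal p R"
    and "((r, s), (a, b)) \<in> loc_rel R p" "((r2, s2), (a2, b2)) \<in> loc_rel R p"
  shows "((r \<otimes> s2 \<oplus> r2 \<otimes> s, s \<otimes> s2), (a \<otimes> b2 \<oplus> a2 \<otimes> b, b \<otimes> b2)) \<in> loc_rel R p"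
proof -
  obtain t t' where rel: "r \<in> carrier R" "s \<in> carrier R - p" "a \<in> carrier R" "b \<in> carrier R - p"
     "r2 \<in> carrier R" "s2 \<in> carrier R - p" "a2 \<in> carrier R" "b2 \<in> carrier R - p"
     "t \<in> carrier R - p" "t' \<in> carrier R - p"
     "t \<otimes> (r \<otimes> b \<ominus> a \<otimes> s) = \<zero>" "t' \<otimes> (r2 \<otimes> b2 \<ominus> a2 \<otimes> s2) = \<zero>"
    using assms(2,3) by (auto simp: loc_rel_def)
  have "(t \<otimes> t') \<otimes> ((r \<otimes> s2 \<oplus> r2 \<otimes> s) \<otimes> (b \<otimes> b2) \<ominus> (a \<otimes> b2 \<oplus> a2 \<otimes> b) \<otimes> (s \<otimes> s2)) =
      (t' \<otimes> s2 \<otimes> b2) \<otimes> (t \<otimes> (r \<otimes> b \<ominus> a \<otimes> s)) \<oplus> (t \<otimes> s \<otimes> b) \<otimes> (t' \<otimes> (r2 \<otimes> b2 \<ominus> a2 \<otimes> s2))"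
    using rel(1,3,5,7) DiffD1[OF rel(2)] DiffD1[OF rel(4)] DiffD1[OF rel(6)] DiffD1[OF rel(8)]
      DiffD1[OF rel(9)] DiffD1[OF rel(10)] by algebra
  then have "(t \<otimes> t') \<otimes> ((r \<otimes> s2 \<oplus> r2 \<otimes> s) \<otimes> (b \<otimes> b2) \<ominus> (a \<otimes> b2 \<oplus> a2 \<otimes> b) \<otimes> (s \<otimes> s2)) = \<zero>"
    using rel by simp
  moreover have "t \<otimes> t' \<in> carrier R - p" "s \<otimes> s2 \<in> carrier R - p" "b \<otimes> b2 \<in> carrier R - p"
    using rel prime_complement_mult_closed[OF P] by blast+
  ultimately show ?thesis using rel loc_rel_iff by auto
qed

text \<open>Both operations of the localization are defined as the union of the classes of all
  representative-wise results; for a well-defined operation this union is a single class.\<close>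
lemma (in cring) Union_frac_classes:
  assumes P: "primeideal p R"
    and rs: "r \<in> carrier R" "s \<in> carrier R - p" and rs2: "r2 \<in> carrier R" "s2 \<in> carrier R - p"
    and compat: "\<And>a b a2 b2. ((r, s), (a, b)) \<in> loc_rel R p \<Longrightarrow> ((r2, s2), (a2, b2)) \<in> loc_rel R p \<Longrightarrow>
        ((N r s r2 s2, D r s r2 s2), (N a b a2 b2, D a b a2 b2)) \<in> loc_rel R p"
  shows "\<Union>{C. \<exists>a b a2 b2. C = frac R p (N a b a2 b2) (D a b a2 b2) \<and>
            (a, b) \<in> frac R p r s \<and> (a2, b2) \<in> frac R p r2 s2}
       = frac R p (N r s r2 s2) (D r s r2 s2)"
proof -
  let ?classes = "{C. \<exists>a b a2 b2. C = frac R p (N a b a2 b2) (D a b a2 b2) \<and>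
            (a, b) \<in> frac R p r s \<and> (a2, b2) \<in> frac R p r2 s2}"
  have "?classes \<subseteq> {frac R p (N r s r2 s2) (D r s r2 s2)}"
  proof
    fix C assume "C \<in> ?classes"
    then obtain a b a2 b2 where C: "C = frac R p (N a b a2 b2) (D a b a2 b2)"
      and "((r, s), (a, b)) \<in> loc_rel R p" "((r2, s2), (a2, b2)) \<in> loc_rel R p"
      unfolding mem_frac_iff by blast
    then have "frac R p (N r s r2 s2) (D r s r2 s2) = C" using frac_eqI[OF P compat] by simp
    then show "C \<in> {frac R p (N r s r2 s2) (D r s r2 s2)}" by simp
  qed
  moreover have "frac R p (N r s r2 s2) (D r s r2 s2) \<in> ?classes"
    using loc_rel_refl[OF P rs] loc_rel_refl[OF P rs2] unfolding mem_frac_iff by blast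
  ultimately have "?classes = {frac R p (N r s r2 s2) (D r s r2 s2)}" by blast
  then show ?thesis by simp
qed

lemma (in cring) loc_mult_frac:
  assumes "primeideal p R" "r \<in> carrier R" "s \<in> carrier R - p" "r2 \<in> carrier R" "s2 \<in> carrier R - p"
  shows "loc_mult R p (frac R p r s) (frac R p r2 s2) = frac R p (r \<otimes> r2) (s \<otimes> s2)"
  unfolding loc_mult_def
  using Union_frac_classes[where N = "\<lambda>a b a2 b2. a \<otimes> a2" and D = "\<lambda>a b a2 b2. b \<otimes> b2"]
    loc_rel_mult assms by simp

lemma (in cring) loc_add_frac:
  assumes "primeideal p R" "r \<in> carrier R" "s \<in> carrier R - p" "r2 \<in> carrier R" "s2 \<in> carrier R - p"
  shows "loc_add R p (frac R p r s) (frac R p r2 s2) = frac R p (r \<otimes> s2 \<oplus> r2 \<otimes> s) (s \<otimes> s2)"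
  unfolding loc_add_def
  using Union_frac_classes[where N = "\<lambda>a b a2 b2. a \<otimes> b2 \<oplus> a2 \<otimes> b" and D = "\<lambda>a b a2 b2. b \<otimes> b2"]
    loc_rel_add assms by simp

lemma localization_carrier_frac:
  assumes "x \<in> carrier (localization R p)"
  obtains r s where "r \<in> carrier R" "s \<in> carrier R - p" "x = frac R p r s"
  using assms by (auto simp: localization_def quotient_def frac_def)

lemma frac_in_localization:
  "r \<in> carrier R \<Longrightarrow> s \<in> carrier R - p \<Longrightarrow> frac R p r s \<in> carrier (localization R p)"
  by (simp add: localization_def frac_def quotientI)

text \<open>The fractions with numerator in \<open>K\<close>; for an ideal \<open>K\<close> this is the extended ideal \<open>K R\<^sub>p\<close>.\<close>
definition loc_fracs :: "('a, 'b) ring_scheme \<Rightarrow> 'a set \<Rightarrow> 'a set \<Rightarrow> ('a \<times> 'a) set set" where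
  "loc_fracs R p K = (\<lambda>(y, t). frac R p y t) ` (K \<times> (carrier R - p))"

lemma mem_loc_fracs:
  "x \<in> loc_fracs R p K \<longleftrightarrow> (\<exists>y \<in> K. \<exists>t \<in> carrier R - p. x = frac R p y t)"
  by (auto simp: loc_fracs_def)

lemma (in cring) loc_fracs_mult_closed:
  assumes P: "primeideal p R" and K: "ideal K R"
    and a: "a \<in> loc_fracs R p K" and c: "c \<in> carrier (localization R p)"
  shows "c \<otimes>\<^bsub>localization R p\<^esub> a \<in> loc_fracs R p K"
    and "a \<otimes>\<^bsub>localization R p\<^esub> c \<in> loc_fracs R p K"
proof -
  obtain y t where a: "a = frac R p y t" "y \<in> K" "t \<in> carrier R - p"
    using a unfolding mem_loc_fracs by blast
  obtain r s where c: "r \<in> carrier R" "s \<in> carrier R - p" "c = frac R p r s"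
    using localization_carrier_frac[OF c] by blast
  have y: "y \<in> carrier R" using ideal.Icarr[OF K a(2)] .
  have "c \<otimes>\<^bsub>localization R p\<^esub> a = frac R p (r \<otimes> y) (s \<otimes> t)"
    "a \<otimes>\<^bsub>localization R p\<^esub> c = frac R p (y \<otimes> r) (t \<otimes> s)"
    using loc_mult_frac[OF P c(1,2) y a(3)] loc_mult_frac[OF P y a(3) c(1,2)] a c
    by (simp_all add: localization_def)
  moreover have "r \<otimes> y \<in> K" "y \<otimes> r \<in> K"
    using ideal.I_l_closed[OF K a(2) c(1)] ideal.I_r_closed[OF K a(2) c(1)] .
  moreover have "s \<otimes> t \<in> carrier R - p" "t \<otimes> s \<in> carrier R - p"
    using prime_complement_mult_closed[OF P] a(3) c(2) by blast+
  ultimately show "c \<otimes>\<^bsub>localization R p\<^esub> a \<in> loc_fracs R p K"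
    "a \<otimes>\<^bsub>localization R p\<^esub> c \<in> loc_fracs R p K"
    unfolding mem_loc_fracs by blast+
qed

lemma (in cring) loc_fracs_add_closed:
  assumes P: "primeideal p R" and K: "ideal K R"
    and a: "a \<in> loc_fracs R p K" and b: "b \<in> loc_fracs R p K"
  shows "a \<oplus>\<^bsub>localization R p\<^esub> b \<in> loc_fracs R p K"
proof -
  obtain y t where a: "a = frac R p y t" "y \<in> K" "t \<in> carrier R - p"
    using a unfolding mem_loc_fracs by blast
  obtain y' t' where b: "b = frac R p y' t'" "y' \<in> K" "t' \<in> carrier R - p"
    using b unfolding mem_loc_fracs by blast
  have y: "y \<in> carrier R" "y' \<in> carrier R" using ideal.Icarr[OF K] a(2) b(2) by blast+
  have "a \<oplus>\<^bsub>localization R p\<^esub> b = frac R p (y \<otimes> t' \<oplus> y' \<otimes> t) (t \<otimes> t')"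
    using loc_add_frac[OF P y(1) a(3) y(2) b(3)] a b by (simp add: localization_def)
  moreover have "y \<otimes> t' \<oplus> y' \<otimes> t \<in> K"
    using a b ideal.I_r_closed[OF K] additive_subgroup.a_closed[OF ideal.axioms(1)[OF K]] by blast
  moreover have "t \<otimes> t' \<in> carrier R - p" using prime_complement_mult_closed[OF P] a(3) b(3) .
  ultimately show ?thesis unfolding mem_loc_fracs by blast
qed

text \<open>That \<open>R\<^sub>p\<close> is a ring is assumed rather than proved: where this is used, it comes
  for free from the hypothesis that \<open>I R\<^sub>m\<close> is a finitely generated ideal of \<open>R\<^sub>m\<close>.\<close>
lemma (in cring) loc_fracs_ideal:
  assumes P: "primeideal p R" and K: "ideal K R" and L: "ring (localization R p)"
  shows "ideal (loc_fracs R p K) (localization R p)"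
proof -
  interpret L: ring "localization R p" by fact
  have sub: "loc_fracs R p K \<subseteq> carrier (localization R p)"
  proof
    fix a assume "a \<in> loc_fracs R p K"
    then obtain y t where "a = frac R p y t" "y \<in> K" "t \<in> carrier R - p"
      unfolding mem_loc_fracs by blast
    then show "a \<in> carrier (localization R p)"
      using frac_in_localization[OF ideal.Icarr[OF K]] by blast
  qed
  show ?thesis
  proof (rule idealI[OF L])
    show "subgroup (loc_fracs R p K) (add_monoid (localization R p))"
    proof
      show "loc_fracs R p K \<subseteq> carrier (add_monoid (localization R p))" using sub by simp
      have "frac R p \<zero> \<one> \<in> loc_fracs R p K"
        using one_in_prime_complement[OF P] additive_subgroup.zero_closed[OF ideal.axioms(1)[OF K]]
        unfolding mem_loc_fracs by blast
      then show "\<one>\<^bsub>add_monoid (localization R p)\<^esub> \<in> loc_fracs R p K"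
        by (simp add: localization_def)
    next
      fix a b assume "a \<in> loc_fracs R p K" "b \<in> loc_fracs R p K"
      then show "a \<otimes>\<^bsub>add_monoid (localization R p)\<^esub> b \<in> loc_fracs R p K"
        using loc_fracs_add_closed[OF P K] by simp
    next
      fix a assume a: "a \<in> loc_fracs R p K"
      then have ac: "a \<in> carrier (localization R p)" using sub by blast
      have "(\<ominus>\<^bsub>localization R p\<^esub> \<one>\<^bsub>localization R p\<^esub>) \<otimes>\<^bsub>localization R p\<^esub> a
          = \<ominus>\<^bsub>localization R p\<^esub> a"
        using L.l_minus[OF L.one_closed ac] L.l_one[OF ac] by simp
      then show "inv\<^bsub>add_monoid (localization R p)\<^esub> a \<in> loc_fracs R p K"
        using loc_fracs_mult_closed(1)[OF P K a L.a_inv_closed[OF L.one_closed]]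
        by (simp add: a_inv_def)
    qed
  next
    fix a x assume "a \<in> loc_fracs R p K" "x \<in> carrier (localization R p)"
    then show "x \<otimes>\<^bsub>localization R p\<^esub> a \<in> loc_fracs R p K"
      "a \<otimes>\<^bsub>localization R p\<^esub> x \<in> loc_fracs R p K"
      using loc_fracs_mult_closed[OF P K] by blast+
  qed
qed

lemma (in cring) frac_one_in_loc_fracsD:
  assumes P: "primeideal p R" and J: "ideal J R" and x: "x \<in> carrier R"
    and mem: "frac R p x \<one> \<in> loc_fracs R p J"
  shows "\<exists>s \<in> carrier R - p. s \<otimes> x \<in> J"
proof -
  have one: "\<one> \<in> carrier R - p" by (rule one_in_prime_complement[OF P])
  obtain y t where y: "frac R p x \<one> = frac R p y t" "y \<in> J" "t \<in> carrier R - p"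
    using mem unfolding mem_loc_fracs by blast
  have yc: "y \<in> carrier R" using ideal.Icarr[OF J y(2)] .
  obtain u where u: "u \<in> carrier R - p" "u \<otimes> (x \<otimes> t \<ominus> y \<otimes> \<one>) = \<zero>"
    using frac_eq_iff[OF P x one yc y(3)] y(1) by (auto simp: loc_rel_def)
  have "(u \<otimes> t) \<otimes> x = u \<otimes> (x \<otimes> t \<ominus> y \<otimes> \<one>) \<oplus> u \<otimes> y"
    using DiffD1[OF u(1)] x yc DiffD1[OF y(3)] by algebra
  then have "(u \<otimes> t) \<otimes> x = u \<otimes> y" using u yc by simp
  moreover have "u \<otimes> y \<in> J" using ideal.I_l_closed[OF J y(2)] u(1) by blast
  moreover have "u \<otimes> t \<in> carrier R - p" using prime_complement_mult_closed[OF P u(1) y(3)] .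
  ultimately show ?thesis by metis
qed

lemma (in cring) finite_subset_loc_fracs_genideal:
  assumes Ic: "I \<subseteq> carrier R" and S: "finite S" "S \<subseteq> loc_fracs R p I"
  obtains F where "finite F" "F \<subseteq> I" "S \<subseteq> loc_fracs R p (Idl F)"
proof -
  obtain C where C: "C \<subseteq> I \<times> (carrier R - p)" "finite C" "S = (\<lambda>(y, t). frac R p y t) ` C"
    using S finite_subset_image unfolding loc_fracs_def by metis
  define F where "F = fst ` C"
  have F: "finite F" "F \<subseteq> I" using C unfolding F_def by auto
  have Fc: "F \<subseteq> carrier R" using F(2) Ic by blast
  have "S \<subseteq> loc_fracs R p (Idl F)"
  proof
    fix \<sigma> assume "\<sigma> \<in> S"
    then obtain y t where yt: "(y, t) \<in> C" "\<sigma> = frac R p y t" using C(3) by auto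
    then have "y \<in> Idl F" "t \<in> carrier R - p"
      using genideal_self[OF Fc] C(1) unfolding F_def by (force, blast)
    then show "\<sigma> \<in> loc_fracs R p (Idl F)" using yt(2) unfolding mem_loc_fracs by blast
  qed
  with F that show ?thesis by blast
qed

lemma (in cring) fin_gen_loc_ideal_local_generators:
  assumes P: "primeideal p R" and I: "ideal I R"
    and fg: "fin_gen_ideal (localization R p) (loc_ideal R p I)"
  obtains F where "finite F" "F \<subseteq> I" "\<And>x. x \<in> I \<Longrightarrow> \<exists>s \<in> carrier R - p. s \<otimes> x \<in> Idl F"
proof -
  obtain S where S: "ideal (loc_ideal R p I) (localization R p)" "finite S"
      "S \<subseteq> carrier (localization R p)" "loc_ideal R p I = genideal (localization R p) S"
    using fg unfolding fin_gen_ideal_def by blast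
  have L: "ring (localization R p)" using ideal.axioms(2)[OF S(1)] .
  have one: "\<one> \<in> carrier R - p" by (rule one_in_prime_complement[OF P])
  have Ic: "I \<subseteq> carrier R" using ideal.Icarr[OF I] by blast
  have "frac R p x \<one> \<in> loc_fracs R p I" if "x \<in> I" for x
    unfolding mem_loc_fracs using that one by blast
  then have img: "(\<lambda>x. frac R p x \<one>) ` I \<subseteq> loc_fracs R p I" by blast
  have imgc: "(\<lambda>x. frac R p x \<one>) ` I \<subseteq> carrier (localization R p)"
    using frac_in_localization[OF _ one] Ic by blast
  have "S \<subseteq> loc_ideal R p I" using ring.genideal_self[OF L S(3)] S(4) by simp
  also have "\<dots> \<subseteq> loc_fracs R p I"
    unfolding loc_ideal_def by (rule ring.genideal_minimal[OF L loc_fracs_ideal[OF P I L] img])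
  finally obtain F where F: "finite F" "F \<subseteq> I" "S \<subseteq> loc_fracs R p (Idl F)"
    using finite_subset_loc_fracs_genideal[OF Ic S(2)] by blast
  have IF: "ideal (Idl F) R" using genideal_ideal F(2) Ic by blast
  have "loc_ideal R p I \<subseteq> loc_fracs R p (Idl F)"
    using S(4) ring.genideal_minimal[OF L loc_fracs_ideal[OF P IF L] F(3)] by simp
  moreover have "frac R p x \<one> \<in> loc_ideal R p I" if "x \<in> I" for x
    using ring.genideal_self[OF L imgc] that unfolding loc_ideal_def by blast
  ultimately have "\<exists>s \<in> carrier R - p. s \<otimes> x \<in> Idl F" if "x \<in> I" for x
    using frac_one_in_loc_fracsD[OF P IF] Ic that by blast
  with F that show ?thesis by blast
qed

lemma (in cring) locally_fin_gen_finite_local_generators: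
  assumes I: "ideal I R" and lfg: "locally_fin_gen R I"
    and Ms: "finite Ms" "\<And>m. m \<in> Ms \<Longrightarrow> maximalideal m R"
  obtains G where "finite G" "G \<subseteq> I"
    "\<And>m x. m \<in> Ms \<Longrightarrow> x \<in> I \<Longrightarrow> \<exists>s \<in> carrier R - m. s \<otimes> x \<in> Idl G"
proof -
  have "\<exists>F. finite F \<and> F \<subseteq> I \<and> (\<forall>x\<in>I. \<exists>s\<in>carrier R - m. s \<otimes> x \<in> Idl F)"
    if "m \<in> Ms" for m
  proof -
    have m: "maximalideal m R" using Ms(2) that .
    obtain F where "finite F" "F \<subseteq> I" "\<And>x. x \<in> I \<Longrightarrow> \<exists>s\<in>carrier R - m. s \<otimes> x \<in> Idl F"
      using fin_gen_loc_ideal_local_generators[OF maximalideal_prime[OF m] I] lfg m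
      unfolding locally_fin_gen_def by blast
    then show ?thesis by blast
  qed
  then obtain h where h: "\<And>m. m \<in> Ms \<Longrightarrow>
      finite (h m) \<and> h m \<subseteq> I \<and> (\<forall>x\<in>I. \<exists>s\<in>carrier R - m. s \<otimes> x \<in> Idl (h m))"
    by metis
  define G where "G = \<Union>(h ` Ms)"
  have G: "finite G" "G \<subseteq> I" using h Ms(1) unfolding G_def by auto
  have Gc: "G \<subseteq> carrier R" using G(2) ideal.Icarr[OF I] by blast
  have sub: "Idl (h m) \<subseteq> Idl G" if "m \<in> Ms" for m
    by (rule subset_Idl_subset[OF Gc]) (use that in \<open>auto simp: G_def\<close>)
  show ?thesis
  proof (rule that[OF G])
    fix m x assume m: "m \<in> Ms" and x: "x \<in> I"
    then obtain s where "s \<in> carrier R - m" "s \<otimes> x \<in> Idl (h m)" using h by blast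
    with sub[OF m] show "\<exists>s \<in> carrier R - m. s \<otimes> x \<in> Idl G" by blast
  qed
qed

lemma (in cring) fin_gen_ideal_if_locally_fin_gen:
  assumes I: "ideal I R" and F0: "finite F0" "F0 \<subseteq> I"
    and fin: "finite {m. maximalideal m R \<and> Idl F0 \<subseteq> m}"
    and lfg: "locally_fin_gen R I"
  shows "fin_gen_ideal R I"
proof -
  have max: "\<And>m. m \<in> {m. maximalideal m R \<and> Idl F0 \<subseteq> m} \<Longrightarrow> maximalideal m R" by blast
  obtain G where G: "finite G" "G \<subseteq> I"
    and loc: "\<And>m x. m \<in> {m. maximalideal m R \<and> Idl F0 \<subseteq> m} \<Longrightarrow> x \<in> I \<Longrightarrow>
                \<exists>s \<in> carrier R - m. s \<otimes> x \<in> Idl G"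
    using locally_fin_gen_finite_local_generators[OF I lfg fin max] by blast
  have FG: "F0 \<union> G \<subseteq> carrier R" using F0(2) G(2) ideal.Icarr[OF I] by blast
  have IFG: "ideal (Idl (F0 \<union> G)) R" by (rule genideal_ideal[OF FG])
  have sub: "Idl F0 \<subseteq> Idl (F0 \<union> G)" "Idl G \<subseteq> Idl (F0 \<union> G)"
    using subset_Idl_subset[OF FG Un_upper1] subset_Idl_subset[OF FG Un_upper2] .
  have "I \<subseteq> Idl (F0 \<union> G)"
  proof
    fix x assume x: "x \<in> I"
    then have xc: "x \<in> carrier R" using ideal.Icarr[OF I] by blast
    show "x \<in> Idl (F0 \<union> G)"
    proof (rule mem_ideal_if_locally_mem[OF IFG xc])
      fix m assume m: "maximalideal m R"
      show "\<exists>s \<in> carrier R - m. s \<otimes> x \<in> Idl (F0 \<union> G)"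
      proof (cases "Idl F0 \<subseteq> m")
        case True
        with m have "m \<in> {m. maximalideal m R \<and> Idl F0 \<subseteq> m}" by blast
        then show ?thesis using loc[OF _ x] sub(2) by blast
      next
        case False
        then obtain s where s: "s \<in> Idl (F0 \<union> G)" "s \<notin> m" using sub(1) by blast
        then have "s \<otimes> x \<in> Idl (F0 \<union> G)" "s \<in> carrier R"
          using ideal.I_r_closed[OF IFG _ xc] ideal.Icarr[OF IFG] by blast+
        with s(2) show ?thesis by blast
      qed
    qed
  qed
  moreover have "Idl (F0 \<union> G) \<subseteq> I" using genideal_minimal[OF I Un_least[OF F0(2) G(2)]] .
  moreover have "finite (F0 \<union> G)" using F0(1) G(1) by simp
  ultimately show ?thesis unfolding fin_gen_ideal_def using I FG by blast
qed

theorem proposition3p4: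
  fixes B :: "('a, 'b) ring_scheme" and A :: "'a set" and I :: "'a set"
  assumes "cring B"
    and "subring A B"
    and "finite_character B A"
    and "ideal I (B\<lparr>carrier := A\<rparr>)"
    and "B_regular B I"
    and "locally_fin_gen (B\<lparr>carrier := A\<rparr>) I"
  shows "fin_gen_ideal (B\<lparr>carrier := A\<rparr>) I"
proof -
  interpret B: cring B by fact
  have Ac: "A \<subseteq> carrier B" using subringE(1)[OF assms(2)] .
  interpret R: cring "B\<lparr>carrier := A\<rparr>"
    using B.subcring_iff[OF Ac] B.subcringI'[OF assms(2)] by blast
  have IA: "I \<subseteq> A" using ideal.Icarr[OF assms(4)] by auto
  obtain F0 where F0: "finite F0" "F0 \<subseteq> I" "B_regular B F0"
    using B_regular_finite_subset[OF B.ring_axioms _ assms(5)] IA Ac by blast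
  have F0A: "F0 \<subseteq> A" using F0(2) IA by blast
  let ?K = "genideal (B\<lparr>carrier := A\<rparr>) F0"
  have K: "ideal ?K (B\<lparr>carrier := A\<rparr>)" using R.genideal_ideal F0A by simp
  have "?K \<subseteq> carrier B" using ideal.Icarr[OF K] Ac by auto
  then have "B_regular B ?K"
    using B_regular_mono[OF B.ring_axioms _ _ F0(3)] R.genideal_self F0A by simp
  then have "finite {m. maximalideal m (B\<lparr>carrier := A\<rparr>) \<and> ?K \<subseteq> m}"
    using assms(3) K unfolding finite_character_def by blast
  then show ?thesis
    using R.fin_gen_ideal_if_locally_fin_gen[OF assms(4) F0(1,2) _ assms(6)] by simp
qed

end
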